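(* For every even $n\ge 6$, $$|E_n| = 4\,|E_{n-2}| - \mathrm{Cat}(n/2-1) = 2\,|E_{n-1}| - \mathrm{Cat}(n/2-1),$$ where $\mathrm{Cat}(k)=\frac{1}{k+1}\binom{2k}{k}$ is the $k$-th Catalan number.
   Context: Let $D$ (OEIS A036991) be the set of nonnegative integers $m$ such that, reading the binary expansion of $m$ from the least significant bit to the most significant bit, at every point the number of 1's read so far is at least the number of 0's read so far. For $n\ge1$ let $M_n=2^n-1$ and let the $n$-level be $E_n=D\cap(M_{n-1},M_n]$, i.e. the elements of $D$ whose binary expansion has exactly $n$ digits. *)

theory Defs
  imports Main
begin

fun bitlen :: "nat \<Rightarrow> nat" where
  "bitlen m = (if m = 0 then 0 else Suc (bitlen (m div 2)))"

declare bitlen.simps[simp del]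

definition bit_at :: "nat \<Rightarrow> nat \<Rightarrow> nat" where
  "bit_at m i = (m div 2 ^ i) mod 2"

(* A036991: reading from LSB to MSB, at every point #1's so far \<ge> #0's so far *)
definition D :: "nat set" where
  "D = {m. \<forall>k \<le> bitlen m.
          card {i. i < k \<and> bit_at m i = 0} \<le> card {i. i < k \<and> bit_at m i = 1}}"

definition Mn :: "nat \<Rightarrow> nat" where
  "Mn n = 2 ^ n - 1"

definition E :: "nat \<Rightarrow> nat set" where
  "E n = D \<inter> {Mn (n - 1)<..Mn n}"

definition Cat :: "nat \<Rightarrow> nat" where
  "Cat k = ((2 * k) choose k) div (k + 1)"

end

theory Submission
  imports Defs
begin

(* Writing an n+1-digit number as 2^n + m with m < 2^n, the leading 1 can never break
   the condition, so |E (n+1)| is the number of n-bit words m (leading zeros allowed)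
   all of whose prefixes, read from the least significant bit, have at least as many
   1's as 0's.  Adding a top bit 1 to such a word always gives such a word again;
   adding a top bit 0 does so unless the word is balanced, which can happen only for
   even n.  Hence the count doubles from odd n to n+1, and from n = 2j to 2j+1 it
   doubles up to the number of balanced words of length 2j.  By the ballot recurrence,
   the admissible words of length n with k ones number C(n,k) - C(n,k+1), which for
   n = 2k is Cat k. *)

fun ones_below :: "nat \<Rightarrow> nat \<Rightarrow> nat" where
  "ones_below m 0 = 0"
| "ones_below m (Suc k) = ones_below m k + bit_at m k"

definition ones_dominate :: "nat \<Rightarrow> nat \<Rightarrow> bool" where
  "ones_dominate n m \<longleftrightarrow> (\<forall>k\<le>n. k \<le> 2 * ones_below m k)"

definition ballot_set :: "nat \<Rightarrow> nat set" where
  "ballot_set n = {m. m < 2 ^ n \<and> ones_dominate n m}"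

definition ballot_set_ones :: "nat \<Rightarrow> nat \<Rightarrow> nat set" where
  "ballot_set_ones n k = {m \<in> ballot_set n. ones_below m n = k}"

lemma bit_at_le_1: "bit_at m i \<le> 1"
  unfolding bit_at_def by simp

lemma ones_below_le: "ones_below m k \<le> k"
proof (induction k)
  case (Suc k)
  then show ?case using bit_at_le_1[of m k] by simp
qed simp

lemma card_less_Suc_filter:
  "card {i. i < Suc k \<and> P i} = card {i. i < k \<and> P i} + (if P k then 1 else 0)"
proof -
  have "{i. i < Suc k \<and> P i} = {i. i < k \<and> P i} \<union> (if P k then {k} else {})"
    by (auto simp: less_Suc_eq)
  then show ?thesis by auto
qed

lemma card_bit_at_1: "card {i. i < k \<and> bit_at m i = 1} = ones_below m k"
proof (induction k)
  case (Suc k)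
  then show ?case
    using card_less_Suc_filter[of k "\<lambda>i. bit_at m i = 1"] bit_at_le_1[of m k] by auto
qed simp

lemma card_bit_at_0: "card {i. i < k \<and> bit_at m i = 0} = k - ones_below m k"
proof (induction k)
  case (Suc k)
  then show ?case
    using card_less_Suc_filter[of k "\<lambda>i. bit_at m i = 0"] bit_at_le_1[of m k]
      ones_below_le[of m k] by auto
qed simp

lemma mem_D_iff: "m \<in> D \<longleftrightarrow> ones_dominate (bitlen m) m"
  unfolding D_def ones_dominate_def card_bit_at_1 card_bit_at_0 by auto

lemma bitlen_eqI: "2 ^ n \<le> m \<Longrightarrow> m < 2 ^ Suc n \<Longrightarrow> bitlen m = Suc n"
proof (induction n arbitrary: m)
  case 0
  then have "m = 1" by simp
  then show ?case by (simp add: bitlen.simps)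
next
  case (Suc n)
  have "2 ^ n \<le> m div 2" "m div 2 < 2 ^ Suc n"
    using Suc.prems by simp_all
  then have "bitlen (m div 2) = Suc n" by (rule Suc.IH)
  moreover have "m \<noteq> 0" using Suc.prems(1) by (intro notI) simp
  ultimately show ?case by (simp add: bitlen.simps)
qed

lemma bit_at_add_pow2_below:
  assumes "m < 2 ^ n" "i < n"
  shows "bit_at (m + b * 2 ^ n) i = bit_at m i"
proof -
  obtain q where q: "n = Suc (i + q)" using assms(2) less_iff_Suc_add by blast
  have "b * 2 ^ n = (b * 2 ^ q * 2) * 2 ^ i"
    unfolding q by (simp add: power_add ac_simps)
  moreover have "(m + (b * 2 ^ q * 2) * 2 ^ i) div 2 ^ i = b * 2 ^ q * 2 + m div 2 ^ i"
    by (rule div_mult_self1) simp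
  ultimately have "(m + b * 2 ^ n) div 2 ^ i = m div 2 ^ i + (b * 2 ^ q) * 2"
    by (metis add.commute)
  then show ?thesis unfolding bit_at_def by simp
qed

lemma bit_at_add_pow2_top:
  assumes "m < 2 ^ n" "b \<le> 1"
  shows "bit_at (m + b * 2 ^ n) n = b"
  unfolding bit_at_def using assms by simp

lemma ones_below_add_pow2_below:
  assumes "m < 2 ^ n" "k \<le> n"
  shows "ones_below (m + b * 2 ^ n) k = ones_below m k"
  using assms(2) by (induction k) (simp_all add: bit_at_add_pow2_below[OF assms(1)])

lemma ones_below_add_pow2_Suc:
  assumes "m < 2 ^ n" "b \<le> 1"
  shows "ones_below (m + b * 2 ^ n) (Suc n) = ones_below m n + b"
  using ones_below_add_pow2_below[OF assms(1) order.refl] bit_at_add_pow2_top[OF assms] by simp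

lemma ones_dominate_top: "ones_dominate n m \<Longrightarrow> n \<le> 2 * ones_below m n"
  unfolding ones_dominate_def by simp

lemma ones_dominate_Suc_add_pow2_iff:
  assumes "m < 2 ^ n" "b \<le> 1"
  shows "ones_dominate (Suc n) (m + b * 2 ^ n) \<longleftrightarrow>
    ones_dominate n m \<and> Suc n \<le> 2 * (ones_below m n + b)"
  unfolding ones_dominate_def
  using ones_below_add_pow2_below[OF assms(1)] ones_below_add_pow2_Suc[OF assms]
  by (auto simp: le_Suc_eq)

lemma card_less_pow2_Suc:
  fixes P :: "nat \<Rightarrow> bool"
  shows "card {m. m < 2 ^ Suc n \<and> P m} =
    card {m. m < 2 ^ n \<and> P m} + card {m. m < 2 ^ n \<and> P (m + 2 ^ n)}"
proof -
  let ?low = "{m. m < 2 ^ n \<and> P m}" and ?high = "{m. m < 2 ^ n \<and> P (m + 2 ^ n)}"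
  have split: "{m. m < 2 ^ Suc n \<and> P m} = ?low \<union> (\<lambda>m. m + 2 ^ n) ` ?high"
  proof (intro set_eqI iffI)
    fix x assume x: "x \<in> {m. m < 2 ^ Suc n \<and> P m}"
    show "x \<in> ?low \<union> (\<lambda>m. m + 2 ^ n) ` ?high"
    proof (cases "x < 2 ^ n")
      case False
      then have "x - 2 ^ n \<in> ?high" using x by auto
      moreover have "x = x - 2 ^ n + 2 ^ n" using False by simp
      ultimately show ?thesis by blast
    qed (use x in auto)
  qed auto
  have "inj_on (\<lambda>m. m + 2 ^ n) ?high" by (simp add: inj_on_def)
  then show ?thesis unfolding split
    by (subst card_Un_disjoint) (auto simp: card_image)
qed

lemma card_ballot_set_Suc:
  "card (ballot_set (Suc n)) =
    card {m \<in> ballot_set n. Suc n \<le> 2 * ones_below m n} + card (ballot_set n)"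
proof -
  have "{m. m < 2 ^ n \<and> ones_dominate (Suc n) m} =
      {m \<in> ballot_set n. Suc n \<le> 2 * ones_below m n}"
    unfolding ballot_set_def using ones_dominate_Suc_add_pow2_iff[of _ n 0] by auto
  moreover have "{m. m < 2 ^ n \<and> ones_dominate (Suc n) (m + 2 ^ n)} = ballot_set n"
    unfolding ballot_set_def using ones_dominate_Suc_add_pow2_iff[of _ n 1] ones_dominate_top
    by fastforce
  ultimately show ?thesis
    unfolding ballot_set_def[of "Suc n"] card_less_pow2_Suc by simp
qed

lemma card_ballot_set_Suc_odd:
  assumes "odd n"
  shows "card (ballot_set (Suc n)) = 2 * card (ballot_set n)"
proof -
  have "Suc n \<le> 2 * ones_below m n" if "m \<in> ballot_set n" for m
  proof -
    have "n \<noteq> 2 * ones_below m n" using assms by (metis dvd_triv_left)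
    then show ?thesis
      using ones_dominate_top[of n m] that unfolding ballot_set_def by simp
  qed
  then have "{m \<in> ballot_set n. Suc n \<le> 2 * ones_below m n} = ballot_set n" by auto
  then show ?thesis using card_ballot_set_Suc[of n] by simp
qed

lemma card_ballot_set_Suc_even:
  "card (ballot_set (Suc (2 * j))) + card (ballot_set_ones (2 * j) j) =
    2 * card (ballot_set (2 * j))"
proof -
  have fin: "finite (ballot_set (2 * j))" unfolding ballot_set_def by simp
  have sub: "ballot_set_ones (2 * j) j \<subseteq> ballot_set (2 * j)"
    unfolding ballot_set_ones_def by auto
  have "{m \<in> ballot_set (2 * j). Suc (2 * j) \<le> 2 * ones_below m (2 * j)} =
      ballot_set (2 * j) - ballot_set_ones (2 * j) j"
    unfolding ballot_set_ones_def ballot_set_def using ones_dominate_top by fastforce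
  then show ?thesis
    using card_ballot_set_Suc[of "2 * j"] card_Diff_subset[OF finite_subset[OF sub fin] sub]
      card_mono[OF fin sub] by simp
qed

lemma ballot_set_ones_eq_empty: "2 * k < n \<Longrightarrow> ballot_set_ones n k = {}"
  unfolding ballot_set_ones_def ballot_set_def using ones_dominate_top by fastforce

lemma card_ballot_set_ones_Suc:
  assumes "Suc n \<le> 2 * Suc j"
  shows "card (ballot_set_ones (Suc n) (Suc j)) =
    card (ballot_set_ones n (Suc j)) + card (ballot_set_ones n j)"
proof -
  have unfold: "ballot_set_ones N k = {m. m < 2 ^ N \<and> ones_dominate N m \<and> ones_below m N = k}"
    for N k unfolding ballot_set_ones_def ballot_set_def by auto
  have "{m. m < 2 ^ n \<and> ones_dominate (Suc n) m \<and> ones_below m (Suc n) = Suc j} =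
      ballot_set_ones n (Suc j)"
    unfolding unfold using assms ones_dominate_Suc_add_pow2_iff[of _ n 0]
      ones_below_add_pow2_Suc[of _ n 0] by auto
  moreover have "{m. m < 2 ^ n \<and> ones_dominate (Suc n) (m + 2 ^ n) \<and>
      ones_below (m + 2 ^ n) (Suc n) = Suc j} = ballot_set_ones n j"
    unfolding unfold using ones_dominate_Suc_add_pow2_iff[of _ n 1]
      ones_below_add_pow2_Suc[of _ n 1] ones_dominate_top by fastforce
  ultimately show ?thesis
    unfolding unfold[of "Suc n"] card_less_pow2_Suc by simp
qed

(* The bound n <= 2k + 1 rather than n <= 2k keeps the induction uniform: at n = 2k + 1
   both sides vanish, the right-hand side by the symmetry of binomial coefficients. *)
lemma card_ballot_set_ones:
  "n \<le> Suc (2 * k) \<Longrightarrow>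
    int (card (ballot_set_ones n k)) = int (n choose k) - int (n choose Suc k)"
proof (induction n arbitrary: k)
  case 0
  have "ballot_set_ones 0 k = (if k = 0 then {0} else {})"
    unfolding ballot_set_ones_def ballot_set_def ones_dominate_def by auto
  then show ?case by simp
next
  case (Suc n)
  show ?case
  proof (cases "n = 2 * k")
    case True
    then have "Suc n choose k = Suc n choose Suc k"
      using binomial_symmetric[of k "Suc n"] by simp
    then show ?thesis using ballot_set_ones_eq_empty[of k "Suc n"] True by simp
  next
    case False
    with Suc.prems obtain j where j: "k = Suc j" "Suc n \<le> 2 * Suc j"
      by (cases k) auto
    then show ?thesis
      using card_ballot_set_ones_Suc[OF j(2)] Suc.IH[of k] Suc.IH[of j] by simp
  qed
qed

lemma Cat_eq_binomial_diff: "int (Cat k) = int (2 * k choose k) - int (2 * k choose Suc k)"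
proof -
  have "Suc k * (2 * k choose Suc k) = k * (2 * k choose k)"
  proof (cases k)
    case (Suc i)
    then have "Suc (k + i) = 2 * k" by simp
    with Suc_times_binomial_add[of k i] show ?thesis by (simp only: Suc)
  qed simp
  then have "int (Suc k) * int (2 * k choose Suc k) = int k * int (2 * k choose k)"
    by (metis of_nat_mult)
  then have "int (2 * k choose k) =
      int (Suc k) * (int (2 * k choose k) - int (2 * k choose Suc k))"
    by (simp add: algebra_simps)
  then have "int (2 * k choose k) div int (Suc k) =
      int (2 * k choose k) - int (2 * k choose Suc k)"
    by (metis nonzero_mult_div_cancel_left of_nat_0_eq_iff Zero_not_Suc)
  then show ?thesis unfolding Cat_def zdiv_int by simp
qed

lemma card_ballot_set_ones_balanced: "card (ballot_set_ones (2 * k) k) = Cat k"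
  using card_ballot_set_ones[of "2 * k" k] Cat_eq_binomial_diff[of k] by simp

lemma E_Suc_eq: "E (Suc n) = (\<lambda>m. m + 2 ^ n) ` ballot_set n"
proof (intro set_eqI iffI)
  fix x assume x: "x \<in> E (Suc n)"
  then have range: "2 ^ n \<le> x" "x < 2 ^ Suc n" unfolding E_def Mn_def by auto
  then have "ones_dominate (Suc n) x"
    using x mem_D_iff bitlen_eqI unfolding E_def by auto
  then have "x - 2 ^ n \<in> ballot_set n"
    using range ones_dominate_Suc_add_pow2_iff[of "x - 2 ^ n" n 1] unfolding ballot_set_def
    by simp
  moreover have "x = x - 2 ^ n + 2 ^ n" using range by simp
  ultimately show "x \<in> (\<lambda>m. m + 2 ^ n) ` ballot_set n" by blast
next
  fix x assume "x \<in> (\<lambda>m. m + 2 ^ n) ` ballot_set n"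
  then obtain m where m: "x = m + 2 ^ n" "m < 2 ^ n" "ones_dominate n m"
    unfolding ballot_set_def by auto
  then have "ones_dominate (Suc n) x"
    using ones_dominate_Suc_add_pow2_iff[of m n 1] ones_dominate_top by fastforce
  moreover have "bitlen x = Suc n" using m by (intro bitlen_eqI) auto
  ultimately have "x \<in> D" by (simp add: mem_D_iff)
  then show "x \<in> E (Suc n)" using m unfolding E_def Mn_def by auto
qed

lemma card_E_Suc: "card (E (Suc n)) = card (ballot_set n)"
  unfolding E_Suc_eq by (rule card_image) (simp add: inj_on_def)

theorem proposition10:
  fixes n :: nat
  assumes "even n" and "n \<ge> 6"
  shows "int (card (E n)) = 4 * int (card (E (n - 2))) - int (Cat (n div 2 - 1))
       \<and> int (card (E n)) = 2 * int (card (E (n - 1))) - int (Cat (n div 2 - 1))"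
proof -
  have "\<exists>j. n = Suc (Suc (2 * j)) \<and> j \<ge> 1" using assms by presburger
  then obtain j where j: "n = Suc (Suc (2 * j))" "j \<ge> 1" by blast
  then obtain i where i: "j = Suc i" by (cases j) auto
  have "card (E n) = card (ballot_set (Suc (2 * j)))"
    using card_E_Suc j(1) by simp
  moreover have "card (E (n - 1)) = card (ballot_set (2 * j))"
    using card_E_Suc j(1) by simp
  moreover have "card (E (n - 2)) = card (ballot_set (Suc (2 * i)))"
    using card_E_Suc j(1) i by simp
  moreover have "card (ballot_set (2 * j)) = 2 * card (ballot_set (Suc (2 * i)))"
    using card_ballot_set_Suc_odd[of "Suc (2 * i)"] i by simp
  moreover have "card (ballot_set (Suc (2 * j))) + Cat j = 2 * card (ballot_set (2 * j))"
    using card_ballot_set_Suc_even[of j] card_ballot_set_ones_balanced[of j] by simp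
  moreover have "n div 2 - 1 = j" using j(1) by simp
  ultimately show ?thesis by simp
qed

end
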